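(* In the setting described in the context, let $\bar{\mathcal{Z}}^*$ be the set of minimizers over $z\in\{0,1\}^p$ of $$\bar\mu(z):=\mathbb{E}_{p(e)p_e(x,y)}\big[\log\bar p_e(y\mid x^z)-\log\bar g(y\mid x^z)\big].$$ Assume $p(\bar{\mathcal{Z}}^* )>0$ and that for every $z$ with $p(z)>0$, as $n\to\infty$ and $E\to\infty$, $$\frac{1}{nE}\sum_{i=1}^n\sum_{e=1}^E\log\hat p_e(y_{ei}\mid x_{ei}^z)\xrightarrow{P}\mathbb{E}_{p(e)p_e(y,x^z)}[\log\bar p_e(y\mid x^z)],\qquad\frac{1}{nE}\sum_{i=1}^n\sum_{e=1}^E\log\hat g(y_{ei}\mid x_{ei}^z)\xrightarrow{P}\mathbb{E}_{p(e)p_e(y,x^z)}[\log\bar g(y\mid x^z)].$$ Then, as $n\to\infty$ and $E\to\infty$: (i) $P(\hat z_{n,E}\in\bar{\mathcal{Z}}^* )\to 1$, where $\hat z_{n,E}:=\arg\max_z\hat p(z\mid\mathcal{D})$; and (ii) $\hat p(\bar{\mathcal{Z}}^*\mid\mathcal{D})\xrightarrow{P}1$.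
   Context: Features $x\in\mathbb{R}^p$, outcome $y$. For $z\in\{0,1\}^p$, $x^z$ is the subvector of coordinates $j$ with $z^{(j)}=1$. $\mathcal{E}$ is the set of all environments of interest; each $e\in\mathcal{E}$ has a joint density $p_e(x,y)$; $p(e)$ is the uniform distribution over $\mathcal{E}$. For each $z$ a conditional model class $\mathcal{P}_{y\mid x^z}$ is fixed. The best-fitting local and pooled models are $\bar p_e(y\mid x^z):=\arg\max_{\tilde p\in\mathcal{P}_{y\mid x^z}}\mathbb{E}_{p_e(x,y)}\log\tilde p(y\mid x^z)$ and $\bar g(y\mid x^z):=\arg\max_{\tilde p\in\mathcal{P}_{y\mid x^z}}\sum_{e\in\mathcal{E}}\mathbb{E}_{p_e(x,y)}\log\tilde p(y\mid x^z)$. Data: $E$ environments drawn i.i.d. from $p(e)$, relabeled $e=1,\dots,E$; in each, $n$ i.i.d. observations $(x_{ei},y_{ei})$ from $p_e(x,y)$; $\mathcal{D}$ is all data. A prior $p(z)$ on $\{0,1\}^p$ is given. $\hat p_e(y\mid x^z)$ maximizes $\sum_{i=1}^n\log\tilde p(y_{ei}\mid x_{ei}^z)$ and $\hat g(y\mid x^z)$ maximizes $\sum_{e=1}^E\sum_{i=1}^n\log\tilde p(y_{ei}\mid x_{ei}^z)$ over $\tilde p\in\mathcal{P}_{y\mid x^z}$. The estimated BIP posterior is $\hat p(z\mid\mathcal{D})\propto p(z)\prod_{e=1}^E\prod_{i=1}^n\frac{\hat g(y_{ei}\mid x_{ei}^z)}{\hat p_e(y_{ei}\mid x_{ei}^z)}$,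 and $\hat p(\bar{\mathcal{Z}}^*\mid\mathcal{D})=\sum_{z\in\bar{\mathcal{Z}}^*}\hat p(z\mid\mathcal{D})$. *)

theory Defs
  imports "HOL-Probability.Probability"
begin

type_synonym 'y cond = "(nat \<Rightarrow> real) \<Rightarrow> 'y \<Rightarrow> real"
  \<comment> \<open>a conditional density model p(y | x^z); x is a feature vector nat => real\<close>
type_synonym 'y dataset = "nat \<Rightarrow> nat \<Rightarrow> (nat \<Rightarrow> real) \<times> 'y"
  \<comment> \<open>d e i = (x_ei, y_ei), environment e < E, observation i < n (0-indexed)\<close>

text \<open>Selection vectors z in {0,1}^p, encoded as subsets of {..<p}.\<close>
definition selections :: "nat \<Rightarrow> nat set set" where
  "selections p = Pow {..<p}"

definition proj :: "nat set \<Rightarrow> (nat \<Rightarrow> real) \<Rightarrow> (nat \<Rightarrow> real)" where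
  "proj z x = restrict x z"

definition maximizes :: "('b \<Rightarrow> real) \<Rightarrow> 'b set \<Rightarrow> 'b \<Rightarrow> bool" where
  "maximizes L S f \<longleftrightarrow> f \<in> S \<and> (\<forall>g\<in>S. L g \<le> L f)"

definition env_dist :: "((nat \<Rightarrow> real) \<times> 'y) measure \<Rightarrow> ('env \<Rightarrow> (nat \<Rightarrow> real) \<times> 'y \<Rightarrow> real)
    \<Rightarrow> 'env \<Rightarrow> ((nat \<Rightarrow> real) \<times> 'y) measure" where
  "env_dist \<nu> pd e = density \<nu> (\<lambda>w. ennreal (pd e w))"

definition env_block :: "((nat \<Rightarrow> real) \<times> 'y) measure \<Rightarrow> 'env set
    \<Rightarrow> ('env \<Rightarrow> (nat \<Rightarrow> real) \<times> 'y \<Rightarrow> real) \<Rightarrow> nat \<Rightarrow> (nat \<Rightarrow> (nat \<Rightarrow> real) \<times> 'y) measure" where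
  "env_block \<nu> Env pd n =
     uniform_count_measure Env \<bind> (\<lambda>e. PiM {..<n} (\<lambda>_. env_dist \<nu> pd e))"

definition data_law :: "((nat \<Rightarrow> real) \<times> 'y) measure \<Rightarrow> 'env set
    \<Rightarrow> ('env \<Rightarrow> (nat \<Rightarrow> real) \<times> 'y \<Rightarrow> real) \<Rightarrow> nat \<Rightarrow> nat \<Rightarrow> 'y dataset measure" where
  "data_law \<nu> Env pd n E = PiM {..<E} (\<lambda>_. env_block \<nu> Env pd n)"

definition pop_ll :: "((nat \<Rightarrow> real) \<times> 'y) measure \<Rightarrow> ('env \<Rightarrow> (nat \<Rightarrow> real) \<times> 'y \<Rightarrow> real)
    \<Rightarrow> nat set \<Rightarrow> 'y cond \<Rightarrow> 'env \<Rightarrow> real" where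
  "pop_ll \<nu> pd z f e = (\<integral>w. ln (f (proj z (fst w)) (snd w)) \<partial>env_dist \<nu> pd e)"

definition samp_ll :: "nat \<Rightarrow> nat set \<Rightarrow> 'y cond \<Rightarrow> (nat \<Rightarrow> (nat \<Rightarrow> real) \<times> 'y) \<Rightarrow> real" where
  "samp_ll n z f b = (\<Sum>i<n. ln (f (proj z (fst (b i))) (snd (b i))))"

definition bip_weight :: "(nat set \<Rightarrow> real) \<Rightarrow> nat \<Rightarrow> nat
    \<Rightarrow> (nat set \<Rightarrow> nat \<Rightarrow> 'y cond) \<Rightarrow> (nat set \<Rightarrow> 'y cond) \<Rightarrow> 'y dataset \<Rightarrow> nat set \<Rightarrow> real" where
  "bip_weight prior n E ph gh d z =
     prior z * (\<Prod>e<E. \<Prod>i<n. gh z (proj z (fst (d e i))) (snd (d e i))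
                               / ph z e (proj z (fst (d e i))) (snd (d e i)))"

definition bip_post :: "nat \<Rightarrow> (nat set \<Rightarrow> real) \<Rightarrow> nat \<Rightarrow> nat
    \<Rightarrow> (nat set \<Rightarrow> nat \<Rightarrow> 'y cond) \<Rightarrow> (nat set \<Rightarrow> 'y cond) \<Rightarrow> 'y dataset \<Rightarrow> nat set \<Rightarrow> real" where
  "bip_post p prior n E ph gh d z =
     bip_weight prior n E ph gh d z / (\<Sum>z'\<in>selections p. bip_weight prior n E ph gh d z')"

definition conv_prob :: "(nat \<Rightarrow> nat \<Rightarrow> 'a measure) \<Rightarrow> (nat \<Rightarrow> nat \<Rightarrow> 'a \<Rightarrow> real) \<Rightarrow> real \<Rightarrow> bool" where
  "conv_prob M X c \<longleftrightarrow>
     (\<forall>n E. X n E \<in> borel_measurable (M n E)) \<and>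
     (\<forall>\<epsilon>>0. ((\<lambda>(n, E). measure (M n E) {d \<in> space (M n E). \<epsilon> < \<bar>X n E d - c\<bar>}) \<longlongrightarrow> 0)
               (sequentially \<times>\<^sub>F sequentially))"

end

theory Submission
  imports Defs
begin

(* The unnormalised BIP weight of z is prior(z) exp(nE A(z)), where A(z) is the difference of the
   averaged pooled and local log-likelihoods, and A(z) converges in probability to c(z) = -mubar(z).
   Outside an event of vanishing probability every A(z) with prior(z) > 0 is within eta of c(z),
   where 3 eta is below the gap between the optimal value of c and every suboptimal one; then each
   suboptimal weight is at most prior(z)/prior(z0) exp(-nE eta) times the weight of an optimal z0
   of positive prior mass. Hence the suboptimal posterior mass vanishes and the posterior mode is
   optimal. *)

lemma prob_space_env_dist:
  assumes "pd e \<in> borel_measurable \<nu>" "\<And>w. 0 \<le> pd e w" "(\<integral>\<^sup>+ w. ennreal (pd e w) \<partial>\<nu>) = 1"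
  shows "prob_space (env_dist \<nu> pd e)"
proof (rule prob_spaceI)
  have "emeasure (env_dist \<nu> pd e) (space (env_dist \<nu> pd e)) = (\<integral>\<^sup>+ w. ennreal (pd e w) \<partial>\<nu>)"
    unfolding env_dist_def using assms(1)
    by (subst emeasure_density) (auto intro!: nn_integral_cong)
  then show "emeasure (env_dist \<nu> pd e) (space (env_dist \<nu> pd e)) = 1"
    using assms(3) by simp
qed

lemma prob_space_env_block:
  assumes "finite Env" "Env \<noteq> {}" "\<And>e. e \<in> Env \<Longrightarrow> prob_space (env_dist \<nu> pd e)"
  shows "prob_space (env_block \<nu> Env pd n)"
  unfolding env_block_def
proof (rule prob_space_bind')
  show "uniform_count_measure Env \<in> space (prob_algebra (uniform_count_measure Env))"
    using assms(1,2) by (simp add: space_prob_algebra prob_space_uniform_count_measure)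
  have "(\<lambda>e. PiM {..<n} (\<lambda>_. env_dist \<nu> pd e)) \<in> count_space Env \<rightarrow>\<^sub>M prob_algebra (PiM {..<n} (\<lambda>_. \<nu>))"
    using assms(3) unfolding measurable_count_space_eq1 space_prob_algebra
    by (auto intro!: prob_space_PiM sets_PiM_cong simp: env_dist_def)
  then show "(\<lambda>e. PiM {..<n} (\<lambda>_. env_dist \<nu> pd e))
      \<in> uniform_count_measure Env \<rightarrow>\<^sub>M prob_algebra (PiM {..<n} (\<lambda>_. \<nu>))"
    by (subst measurable_cong_sets[OF sets_uniform_count_measure_count_space refl])
qed

lemma prob_space_data_law:
  assumes "finite Env" "Env \<noteq> {}" "\<And>e. e \<in> Env \<Longrightarrow> prob_space (env_dist \<nu> pd e)"
  shows "prob_space (data_law \<nu> Env pd n E)"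
  unfolding data_law_def using prob_space_env_block[OF assms] by (rule prob_space_PiM)

lemma conv_prob_cong:
  assumes "conv_prob M X c" "\<And>n E d. d \<in> space (M n E) \<Longrightarrow> X n E d = Y n E d"
  shows "conv_prob M Y c"
proof -
  have "Y n E \<in> borel_measurable (M n E)" for n E
  proof -
    have "X n E \<in> borel_measurable (M n E)"
      using assms(1) by (simp add: conv_prob_def)
    then show ?thesis
      by (rule measurable_cong[THEN iffD1, rotated]) (rule assms(2))
  qed
  moreover have "{d \<in> space (M n E). \<epsilon> < \<bar>Y n E d - c\<bar>} = {d \<in> space (M n E). \<epsilon> < \<bar>X n E d - c\<bar>}"
    for n E \<epsilon>
    using assms(2) by auto
  ultimately show ?thesis using assms(1) by (simp add: conv_prob_def)
qed

lemma tendsto_measure_zero_mono: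
  assumes "\<And>n E. prob_space (M n E)" "\<And>n E. B n E \<in> sets (M n E)"
    and "((\<lambda>(n, E). measure (M n E) (B n E)) \<longlongrightarrow> 0) F"
    and "\<forall>\<^sub>F (n, E) in F. S n E \<subseteq> B n E"
  shows "((\<lambda>(n, E). measure (M n E) (S n E)) \<longlongrightarrow> 0) F"
proof (rule tendsto_sandwich[OF _ _ tendsto_const assms(3)])
  show "\<forall>\<^sub>F x in F. 0 \<le> (case x of (n, E) \<Rightarrow> measure (M n E) (S n E))"
    by (simp add: split_beta)
  show "\<forall>\<^sub>F x in F. (case x of (n, E) \<Rightarrow> measure (M n E) (S n E))
      \<le> (case x of (n, E) \<Rightarrow> measure (M n E) (B n E))"
    using assms(4) by eventually_elim
      (auto intro!: finite_measure.finite_measure_mono[OF prob_space.axioms(1)[OF assms(1)]] assms(2))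
qed

lemma conv_prob_diff:
  assumes "\<And>n E. prob_space (M n E)" "conv_prob M X a" "conv_prob M Y b"
  shows "conv_prob M (\<lambda>n E d. X n E d - Y n E d) (a - b)"
  unfolding conv_prob_def
proof (intro conjI allI impI)
  have meas: "X n E \<in> borel_measurable (M n E)" "Y n E \<in> borel_measurable (M n E)" for n E
    using assms(2,3) by (auto simp: conv_prob_def)
  then show "(\<lambda>d. X n E d - Y n E d) \<in> borel_measurable (M n E)" for n E
    by (intro borel_measurable_diff)
  fix \<epsilon> :: real
  assume "0 < \<epsilon>"
  define DX where "DX n E = {d \<in> space (M n E). \<epsilon>/2 < \<bar>X n E d - a\<bar>}" for n E
  define DY where "DY n E = {d \<in> space (M n E). \<epsilon>/2 < \<bar>Y n E d - b\<bar>}" for n E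
  have sets: "DX n E \<in> sets (M n E)" "DY n E \<in> sets (M n E)" for n E
    unfolding DX_def DY_def using meas[of n E] by measurable
  have "((\<lambda>(n, E). measure (M n E) (DX n E) + measure (M n E) (DY n E)) \<longlongrightarrow> 0)
      (sequentially \<times>\<^sub>F sequentially)"
    using tendsto_add[OF assms(2,3)[unfolded conv_prob_def, THEN conjunct2, rule_format, of "\<epsilon>/2"]] \<open>0 < \<epsilon>\<close>
    unfolding DX_def DY_def by (simp add: split_beta')
  then have "((\<lambda>(n, E). measure (M n E) (DX n E \<union> DY n E)) \<longlongrightarrow> 0) (sequentially \<times>\<^sub>F sequentially)"
    by (rule tendsto_sandwich[OF _ _ tendsto_const, rotated 2])
      (use sets in \<open>auto simp: split_beta intro!: always_eventually measure_Un_le\<close>)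
  then show "((\<lambda>(n, E). measure (M n E) {d \<in> space (M n E). \<epsilon> < \<bar>X n E d - Y n E d - (a - b)\<bar>}) \<longlongrightarrow> 0)
      (sequentially \<times>\<^sub>F sequentially)"
  proof (rule tendsto_measure_zero_mono[OF assms(1) sets.Un[OF sets]])
    have split: "\<epsilon>/2 < \<bar>x - a\<bar> \<or> \<epsilon>/2 < \<bar>y - b\<bar>" if "\<epsilon> < \<bar>x - y - (a - b)\<bar>" for x y
      using that by arith
    show "\<forall>\<^sub>F (n, E) in sequentially \<times>\<^sub>F sequentially.
        {d \<in> space (M n E). \<epsilon> < \<bar>X n E d - Y n E d - (a - b)\<bar>} \<subseteq> DX n E \<union> DY n E"
      by (intro always_eventually) (auto simp: DX_def DY_def dest: split)
  qed
qed

lemma tendsto_prob_exists_deviation: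
  assumes "finite P" "0 < \<eta>"
    and "\<And>z. z \<in> P \<Longrightarrow> conv_prob M (\<lambda>n E d. X n E d z) (c z)"
  shows "((\<lambda>(n, E). measure (M n E) {d \<in> space (M n E). \<exists>z\<in>P. \<eta> < \<bar>X n E d z - c z\<bar>}) \<longlongrightarrow> 0)
           (sequentially \<times>\<^sub>F sequentially)"
proof (rule tendsto_sandwich[OF _ _ tendsto_const])
  define D where "D n E z = {d \<in> space (M n E). \<eta> < \<bar>X n E d z - c z\<bar>}" for n E z
  have sets: "D n E z \<in> sets (M n E)" if "z \<in> P" for n E z
  proof -
    have "(\<lambda>d. X n E d z) \<in> borel_measurable (M n E)"
      using assms(3)[OF that] by (simp add: conv_prob_def)
    then show ?thesis
      unfolding D_def by measurable
  qed
  have "measure (M n E) {d \<in> space (M n E). \<exists>z\<in>P. \<eta> < \<bar>X n E d z - c z\<bar>}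
      \<le> (\<Sum>z\<in>P. measure (M n E) (D n E z))" for n E
  proof -
    have "{d \<in> space (M n E). \<exists>z\<in>P. \<eta> < \<bar>X n E d z - c z\<bar>} = (\<Union>z\<in>P. D n E z)"
      by (auto simp: D_def)
    then show ?thesis
      using sets assms(1) by (simp add: measure_UNION_le)
  qed
  then show "\<forall>\<^sub>F x in sequentially \<times>\<^sub>F sequentially.
      (case x of (n, E) \<Rightarrow> measure (M n E) {d \<in> space (M n E). \<exists>z\<in>P. \<eta> < \<bar>X n E d z - c z\<bar>})
      \<le> (\<Sum>z\<in>P. (case x of (n, E) \<Rightarrow> measure (M n E) (D n E z)))"
    by (simp add: split_beta)
  show "((\<lambda>x. \<Sum>z\<in>P. case x of (n, E) \<Rightarrow> measure (M n E) (D n E z)) \<longlongrightarrow> 0) (sequentially \<times>\<^sub>F sequentially)"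
    using assms(2,3) by (intro tendsto_null_sum) (auto simp: conv_prob_def D_def)
qed (simp add: split_beta)

lemma tendsto_exp_neg_mult_prod_sequentially:
  fixes \<eta> :: real
  assumes "0 < \<eta>"
  shows "((\<lambda>(n, E). exp (- (real n * real E * \<eta>))) \<longlongrightarrow> 0) (sequentially \<times>\<^sub>F sequentially)"
proof -
  have "filterlim (\<lambda>x. real (fst x) * real (snd x)) at_top (sequentially \<times>\<^sub>F sequentially)"
    by (intro filterlim_at_top_mult_at_top filterlim_compose[OF filterlim_real_sequentially]
        filterlim_fst filterlim_snd)
  then have "filterlim (\<lambda>x. real (fst x) * real (snd x) * \<eta>) at_top (sequentially \<times>\<^sub>F sequentially)"
    by (rule filterlim_at_top_mult_tendsto_pos[OF tendsto_const assms])
  then have "filterlim (\<lambda>x. - (real (fst x) * real (snd x) * \<eta>)) at_bot (sequentially \<times>\<^sub>F sequentially)"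
    by (simp add: filterlim_uminus_at_bot)
  then show ?thesis
    by (rule filterlim_compose[OF exp_at_bot, unfolded comp_def, THEN tendsto_cong[THEN iffD1, rotated]])
      (simp add: split_beta)
qed

lemma finite_gap_below:
  fixes c :: "'b \<Rightarrow> real"
  assumes "finite S"
  shows "\<exists>\<delta>>0. \<forall>z\<in>S. c z < m \<longrightarrow> c z + \<delta> \<le> m"
proof -
  define \<delta> where "\<delta> = Min (insert 1 ((\<lambda>z. m - c z) ` {z \<in> S. c z < m}))"
  have "0 < \<delta>"
    using assms unfolding \<delta>_def by (subst Min_gr_iff) auto
  moreover have "c z + \<delta> \<le> m" if "z \<in> S" "c z < m" for z
  proof -
    have "\<delta> \<le> m - c z"
      using assms that unfolding \<delta>_def by (intro Min_le) auto
    then show ?thesis by simp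
  qed
  ultimately show ?thesis by blast
qed

lemma exp_weight_le_of_gap:
  fixes a a0 c c0 t \<eta> \<pi> \<pi>0 :: real
  assumes "0 \<le> \<pi>" "0 < \<pi>0" "0 \<le> t"
    and "\<bar>a - c\<bar> \<le> \<eta>" "\<bar>a0 - c0\<bar> \<le> \<eta>" "c + 3 * \<eta> \<le> c0"
  shows "\<pi> * exp (t * a) \<le> \<pi> / \<pi>0 * exp (- (t * \<eta>)) * (\<pi>0 * exp (t * a0))"
proof -
  have "t * a \<le> t * (a0 - \<eta>)"
    using assms(3-6) by (intro mult_left_mono) auto
  then have "\<pi> * exp (t * a) \<le> \<pi> * exp (t * a0 - t * \<eta>)"
    using assms(1) by (intro mult_left_mono) (auto simp: algebra_simps)
  also have "\<dots> = \<pi> / \<pi>0 * exp (- (t * \<eta>)) * (\<pi>0 * exp (t * a0))"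
    using assms(2) by (simp add: exp_diff exp_minus field_simps)
  finally show ?thesis .
qed

lemma normalized_sum_ge:
  fixes w q :: "'b \<Rightarrow> real"
  assumes "finite S" "Z \<subseteq> S" "z0 \<in> Z" "\<And>z. z \<in> S \<Longrightarrow> 0 \<le> w z" "0 < w z0"
    and dominated: "\<And>z. z \<in> S - Z \<Longrightarrow> w z \<le> q z * w z0"
  shows "1 - (\<Sum>z\<in>S - Z. q z) \<le> (\<Sum>z\<in>Z. w z) / (\<Sum>z\<in>S. w z)"
proof -
  define W where "W = (\<Sum>z\<in>S. w z)"
  have "w z0 \<le> W"
    unfolding W_def using assms(1-4) by (intro member_le_sum) auto
  have q_nonneg: "0 \<le> q z" if "z \<in> S - Z" for z
  proof -
    have "0 \<le> q z * w z0"
      using dominated[OF that] assms(4)[of z] that by force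
    then show ?thesis
      using assms(5) by (simp add: zero_le_mult_iff)
  qed
  have "(\<Sum>z\<in>S - Z. w z) \<le> (\<Sum>z\<in>S - Z. q z * w z0)"
    using dominated by (rule sum_mono)
  also have "\<dots> \<le> (\<Sum>z\<in>S - Z. q z) * W"
    unfolding sum_distrib_right[symmetric] using \<open>w z0 \<le> W\<close> q_nonneg
    by (intro mult_left_mono sum_nonneg) auto
  finally have "(\<Sum>z\<in>S - Z. w z) \<le> (\<Sum>z\<in>S - Z. q z) * W" .
  moreover have "W = (\<Sum>z\<in>Z. w z) + (\<Sum>z\<in>S - Z. w z)"
    unfolding W_def using assms(1,2) by (metis add.commute sum.subset_diff)
  ultimately show ?thesis
    using \<open>w z0 \<le> W\<close> assms(5) by (simp add: W_def[symmetric] field_simps)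
qed

lemma maximizes_normalized_mem:
  fixes w :: "'b \<Rightarrow> real"
  assumes "maximizes (\<lambda>z. w z / (\<Sum>z'\<in>S. w z')) S zh" "z0 \<in> S" "0 < (\<Sum>z\<in>S. w z)"
    and "\<And>z. z \<in> S - Z \<Longrightarrow> w z < w z0"
  shows "zh \<in> Z"
proof (rule ccontr)
  assume "zh \<notin> Z"
  moreover have "zh \<in> S" "w z0 \<le> w zh"
    using assms(1-3) by (auto simp: maximizes_def divide_le_cancel)
  ultimately show False
    using assms(4) by force
qed

(* A n E d z stands for the mean log-likelihood ratio (pooled minus local) of z on the data d, so
   that weight is the unnormalised BIP posterior (bip_weight_eq_exp_mean), and c for its limit. *)
locale posterior_concentration =
  fixes M :: "nat \<Rightarrow> nat \<Rightarrow> 'a measure"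
    and S :: "'b set"
    and prior :: "'b \<Rightarrow> real"
    and A :: "nat \<Rightarrow> nat \<Rightarrow> 'a \<Rightarrow> 'b \<Rightarrow> real"
    and c :: "'b \<Rightarrow> real"
    and z0 :: 'b
  assumes prob_space_M: "\<And>n E. prob_space (M n E)"
    and finite_S: "finite S"
    and prior_nonneg: "\<And>z. z \<in> S \<Longrightarrow> 0 \<le> prior z"
    and conv_prob_A: "\<And>z. z \<in> S \<Longrightarrow> 0 < prior z \<Longrightarrow> conv_prob M (\<lambda>n E d. A n E d z) (c z)"
    and z0_in_S: "z0 \<in> S"
    and z0_max: "\<And>z. z \<in> S \<Longrightarrow> c z \<le> c z0"
    and prior_z0_pos: "0 < prior z0"
begin

definition optimal :: "'b set" where
  "optimal = {z \<in> S. \<forall>z'\<in>S. c z' \<le> c z}"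

definition weight :: "nat \<Rightarrow> nat \<Rightarrow> 'a \<Rightarrow> 'b \<Rightarrow> real" where
  "weight n E d z = prior z * exp (real n * real E * A n E d z)"

definition posterior :: "nat \<Rightarrow> nat \<Rightarrow> 'a \<Rightarrow> 'b \<Rightarrow> real" where
  "posterior n E d z = weight n E d z / (\<Sum>z'\<in>S. weight n E d z')"

definition deviating :: "real \<Rightarrow> nat \<Rightarrow> nat \<Rightarrow> 'a set" where
  "deviating \<eta> n E = {d \<in> space (M n E). \<exists>z\<in>{z \<in> S. 0 < prior z}. \<eta> < \<bar>A n E d z - c z\<bar>}"

lemma optimal_subset: "optimal \<subseteq> S"
  by (auto simp: optimal_def)

lemma z0_optimal: "z0 \<in> optimal"
  using z0_in_S z0_max by (auto simp: optimal_def)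

lemma less_c_z0_if_not_optimal: "z \<in> S - optimal \<Longrightarrow> c z < c z0"
  using z0_in_S z0_max by (force simp: optimal_def not_le)

lemma optimality_margin: "\<exists>\<eta>>0. \<forall>z\<in>S - optimal. c z + 3 * \<eta> \<le> c z0"
proof -
  obtain \<delta> where "0 < \<delta>" "\<And>z. z \<in> S \<Longrightarrow> c z < c z0 \<Longrightarrow> c z + \<delta> \<le> c z0"
    using finite_gap_below[OF finite_S, of c "c z0"] by blast
  then show ?thesis
    using less_c_z0_if_not_optimal by (intro exI[of _ "\<delta> / 3"]) auto
qed

lemma weight_nonneg: "z \<in> S \<Longrightarrow> 0 \<le> weight n E d z"
  using prior_nonneg by (simp add: weight_def)

lemma weight_z0_pos: "0 < weight n E d z0"
  using prior_z0_pos by (simp add: weight_def)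

lemma sum_weight_ge_weight_z0: "weight n E d z0 \<le> (\<Sum>z\<in>S. weight n E d z)"
  using finite_S z0_in_S weight_nonneg by (intro member_le_sum) auto

lemma sum_weight_pos: "0 < (\<Sum>z\<in>S. weight n E d z)"
  using weight_z0_pos sum_weight_ge_weight_z0 by (rule less_le_trans)

lemma A_measurable: "z \<in> S \<Longrightarrow> 0 < prior z \<Longrightarrow> (\<lambda>d. A n E d z) \<in> borel_measurable (M n E)"
  using conv_prob_A by (simp add: conv_prob_def)

lemma weight_measurable:
  assumes "z \<in> S"
  shows "(\<lambda>d. weight n E d z) \<in> borel_measurable (M n E)"
proof (cases "prior z = 0")
  case False
  then have "(\<lambda>d. A n E d z) \<in> borel_measurable (M n E)"
    using A_measurable assms prior_nonneg[OF assms] by simp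
  then show ?thesis
    unfolding weight_def by measurable
qed (simp add: weight_def)

lemma posterior_measurable: "z \<in> S \<Longrightarrow> (\<lambda>d. posterior n E d z) \<in> borel_measurable (M n E)"
  unfolding posterior_def using weight_measurable
  by (intro borel_measurable_divide borel_measurable_sum) auto

lemma deviating_sets: "deviating \<eta> n E \<in> sets (M n E)"
  unfolding deviating_def using finite_S A_measurable
  by (intro sets.sets_Collect_finite_Ex) auto

lemma tendsto_prob_deviating:
  assumes "0 < \<eta>"
  shows "((\<lambda>(n, E). measure (M n E) (deviating \<eta> n E)) \<longlongrightarrow> 0) (sequentially \<times>\<^sub>F sequentially)"
  unfolding deviating_def using finite_S assms conv_prob_A
  by (intro tendsto_prob_exists_deviation) auto

lemma weight_le_if_not_deviating:
  assumes margin: "\<forall>z\<in>S - optimal. c z + 3 * \<eta> \<le> c z0"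
    and d: "d \<in> space (M n E) - deviating \<eta> n E" and z: "z \<in> S - optimal"
  shows "weight n E d z \<le> prior z / prior z0 * exp (- (real n * real E * \<eta>)) * weight n E d z0"
proof (cases "prior z = 0")
  case False
  then have "0 < prior z"
    using prior_nonneg[of z] z by simp
  then show ?thesis
    using d z z0_in_S prior_z0_pos margin prior_nonneg[of z]
    unfolding weight_def deviating_def
    by (intro exp_weight_le_of_gap) (auto simp: not_less)
qed (simp add: weight_def)

lemma maximizer_not_optimal_subset_deviating:
  assumes margin: "\<forall>z\<in>S - optimal. c z + 3 * \<eta> \<le> c z0"
    and small: "\<forall>z\<in>S. prior z / prior z0 * exp (- (real n * real E * \<eta>)) < 1"
    and zh: "\<And>d. d \<in> space (M n E) \<Longrightarrow> maximizes (posterior n E d) S (zh d)"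
  shows "{d \<in> space (M n E). zh d \<notin> optimal} \<subseteq> deviating \<eta> n E"
proof (rule subsetI, rule ccontr)
  fix d
  assume d_space: "d \<in> {d \<in> space (M n E). zh d \<notin> optimal}" and "d \<notin> deviating \<eta> n E"
  then have d: "d \<in> space (M n E) - deviating \<eta> n E"
    by simp
  have "zh d \<in> optimal"
  proof (rule maximizes_normalized_mem[where w = "weight n E d"])
    show "maximizes (\<lambda>z. weight n E d z / (\<Sum>z'\<in>S. weight n E d z')) S (zh d)"
      using zh d by (simp add: posterior_def[abs_def])
    show "weight n E d z < weight n E d z0" if "z \<in> S - optimal" for z
    proof -
      have "weight n E d z \<le> prior z / prior z0 * exp (- (real n * real E * \<eta>)) * weight n E d z0"
        using weight_le_if_not_deviating[OF margin d that] .
      also have "\<dots> < 1 * weight n E d z0"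
        using small that weight_z0_pos by (intro mult_strict_right_mono) auto
      finally show ?thesis
        by simp
    qed
  qed (use z0_in_S sum_weight_pos in auto)
  with d_space show False
    by simp
qed

lemma posterior_optimal_close_if_not_deviating:
  assumes margin: "\<forall>z\<in>S - optimal. c z + 3 * \<eta> \<le> c z0"
    and d: "d \<in> space (M n E) - deviating \<eta> n E"
  shows "\<bar>(\<Sum>z\<in>optimal. posterior n E d z) - 1\<bar>
           \<le> (\<Sum>z\<in>S - optimal. prior z) / prior z0 * exp (- (real n * real E * \<eta>))"
proof -
  define W where "W = (\<Sum>z\<in>S. weight n E d z)"
  have sum_posterior: "(\<Sum>z\<in>optimal. posterior n E d z) = (\<Sum>z\<in>optimal. weight n E d z) / W"
    by (simp add: W_def posterior_def sum_divide_distrib)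
  have "1 - (\<Sum>z\<in>S - optimal. prior z / prior z0 * exp (- (real n * real E * \<eta>)))
      \<le> (\<Sum>z\<in>optimal. weight n E d z) / W"
    unfolding W_def
    using finite_S optimal_subset z0_optimal weight_nonneg weight_z0_pos
      weight_le_if_not_deviating[OF margin d]
    by (rule normalized_sum_ge)
  moreover have "(\<Sum>z\<in>S - optimal. prior z / prior z0 * exp (- (real n * real E * \<eta>)))
      = (\<Sum>z\<in>S - optimal. prior z) / prior z0 * exp (- (real n * real E * \<eta>))"
    by (simp add: sum_distrib_right sum_divide_distrib)
  moreover have "(\<Sum>z\<in>optimal. weight n E d z) / W \<le> 1"
    using finite_S optimal_subset weight_nonneg sum_weight_pos unfolding W_def
    by (subst divide_le_eq_1_pos) (auto intro!: sum_mono2)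
  ultimately show ?thesis
    unfolding sum_posterior abs_le_iff by linarith
qed

lemma posterior_deviation_subset_deviating:
  assumes margin: "\<forall>z\<in>S - optimal. c z + 3 * \<eta> \<le> c z0"
    and small: "(\<Sum>z\<in>S - optimal. prior z) / prior z0 * exp (- (real n * real E * \<eta>)) < \<epsilon>"
  shows "{d \<in> space (M n E). \<epsilon> < \<bar>(\<Sum>z\<in>optimal. posterior n E d z) - 1\<bar>} \<subseteq> deviating \<eta> n E"
  using posterior_optimal_close_if_not_deviating[OF margin] small by fastforce

theorem tendsto_prob_maximizer_optimal:
  assumes zh: "\<And>n E d. d \<in> space (M n E) \<Longrightarrow> maximizes (posterior n E d) S (zh n E d)"
    and zh_sets: "\<And>n E. {d \<in> space (M n E). zh n E d \<in> optimal} \<in> sets (M n E)"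
  shows "((\<lambda>(n, E). measure (M n E) {d \<in> space (M n E). zh n E d \<in> optimal}) \<longlongrightarrow> 1)
           (sequentially \<times>\<^sub>F sequentially)"
proof -
  obtain \<eta> where "0 < \<eta>" and margin: "\<forall>z\<in>S - optimal. c z + 3 * \<eta> \<le> c z0"
    using optimality_margin by blast
  have "\<forall>\<^sub>F x in sequentially \<times>\<^sub>F sequentially.
      \<forall>z\<in>S. prior z / prior z0 * (case x of (n, E) \<Rightarrow> exp (- (real n * real E * \<eta>))) < 1"
    using finite_S tendsto_exp_neg_mult_prod_sequentially[OF \<open>0 < \<eta>\<close>]
    by (intro eventually_ball_finite ballI order_tendstoD(2)[OF tendsto_mult_right_zero]) auto
  then have "\<forall>\<^sub>F (n, E) in sequentially \<times>\<^sub>F sequentially.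
      {d \<in> space (M n E). zh n E d \<notin> optimal} \<subseteq> deviating \<eta> n E"
    by (rule eventually_mono)
      (auto intro!: maximizer_not_optimal_subset_deviating[OF margin _ zh, THEN subsetD])
  then have "((\<lambda>(n, E). measure (M n E) {d \<in> space (M n E). zh n E d \<notin> optimal}) \<longlongrightarrow> 0)
      (sequentially \<times>\<^sub>F sequentially)"
    by (rule tendsto_measure_zero_mono[OF prob_space_M deviating_sets tendsto_prob_deviating[OF \<open>0 < \<eta>\<close>]])
  moreover have "measure (M n E) {d \<in> space (M n E). zh n E d \<notin> optimal}
      = 1 - measure (M n E) {d \<in> space (M n E). zh n E d \<in> optimal}" for n E
  proof -
    have "{d \<in> space (M n E). zh n E d \<notin> optimal}
        = space (M n E) - {d \<in> space (M n E). zh n E d \<in> optimal}"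
      by auto
    then show ?thesis
      using prob_space.prob_compl[OF prob_space_M zh_sets] by simp
  qed
  ultimately have "((\<lambda>(n, E). 1 - measure (M n E) {d \<in> space (M n E). zh n E d \<in> optimal}) \<longlongrightarrow> 0)
      (sequentially \<times>\<^sub>F sequentially)"
    by simp
  from tendsto_diff[OF tendsto_const this, of 1] show ?thesis
    by (simp add: split_beta')
qed

theorem conv_prob_posterior_optimal:
  "conv_prob M (\<lambda>n E d. \<Sum>z\<in>optimal. posterior n E d z) 1"
  unfolding conv_prob_def
proof (intro conjI allI impI)
  show "(\<lambda>d. \<Sum>z\<in>optimal. posterior n E d z) \<in> borel_measurable (M n E)" for n E
    using posterior_measurable optimal_subset by (intro borel_measurable_sum) auto
  fix \<epsilon> :: real
  assume "0 < \<epsilon>"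
  obtain \<eta> where "0 < \<eta>" and margin: "\<forall>z\<in>S - optimal. c z + 3 * \<eta> \<le> c z0"
    using optimality_margin by blast
  have "\<forall>\<^sub>F x in sequentially \<times>\<^sub>F sequentially.
      (\<Sum>z\<in>S - optimal. prior z) / prior z0 * (case x of (n, E) \<Rightarrow> exp (- (real n * real E * \<eta>))) < \<epsilon>"
    using tendsto_exp_neg_mult_prod_sequentially[OF \<open>0 < \<eta>\<close>] \<open>0 < \<epsilon>\<close>
    by (intro order_tendstoD(2)[OF tendsto_mult_right_zero])
  then have "\<forall>\<^sub>F (n, E) in sequentially \<times>\<^sub>F sequentially.
      {d \<in> space (M n E). \<epsilon> < \<bar>(\<Sum>z\<in>optimal. posterior n E d z) - 1\<bar>} \<subseteq> deviating \<eta> n E"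
    by (rule eventually_mono) (auto intro!: posterior_deviation_subset_deviating[OF margin])
  then show "((\<lambda>(n, E). measure (M n E)
      {d \<in> space (M n E). \<epsilon> < \<bar>(\<Sum>z\<in>optimal. posterior n E d z) - 1\<bar>}) \<longlongrightarrow> 0)
      (sequentially \<times>\<^sub>F sequentially)"
    by (rule tendsto_measure_zero_mono[OF prob_space_M deviating_sets tendsto_prob_deviating[OF \<open>0 < \<eta>\<close>]])
qed

end

lemma maximizes_cong:
  "(\<And>x. x \<in> S \<Longrightarrow> L x = L' x) \<Longrightarrow> maximizes L S f \<longleftrightarrow> maximizes L' S f"
  by (auto simp: maximizes_def)

lemma bip_weight_eq_exp:
  assumes "\<And>e i. e < E \<Longrightarrow> i < n \<Longrightarrow> 0 < gh z (proj z (fst (d e i))) (snd (d e i))"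
    and "\<And>e i. e < E \<Longrightarrow> i < n \<Longrightarrow> 0 < ph z e (proj z (fst (d e i))) (snd (d e i))"
  shows "bip_weight prior n E ph gh d z
           = prior z * exp (\<Sum>e<E. samp_ll n z (gh z) (d e) - samp_ll n z (ph z e) (d e))"
proof -
  let ?g = "\<lambda>e i. gh z (proj z (fst (d e i))) (snd (d e i))"
  let ?p = "\<lambda>e i. ph z e (proj z (fst (d e i))) (snd (d e i))"
  have "(\<Prod>e<E. \<Prod>i<n. ?g e i / ?p e i) = (\<Prod>e<E. \<Prod>i<n. exp (ln (?g e i) - ln (?p e i)))"
    using assms by (intro prod.cong refl) (simp add: exp_diff)
  also have "\<dots> = exp (\<Sum>e<E. \<Sum>i<n. ln (?g e i) - ln (?p e i))"
    by (simp add: exp_sum)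
  also have "(\<Sum>e<E. \<Sum>i<n. ln (?g e i) - ln (?p e i))
      = (\<Sum>e<E. samp_ll n z (gh z) (d e) - samp_ll n z (ph z e) (d e))"
    by (simp add: samp_ll_def sum_subtractf)
  finally show ?thesis
    by (simp add: bip_weight_def)
qed

(* Also for n = 0 or E = 0: there 1 / 0 = 0, but the double sum is empty. *)
lemma mult_average_double_sum:
  fixes f :: "nat \<Rightarrow> nat \<Rightarrow> real"
  shows "real n * real E * (1 / (real n * real E) * (\<Sum>i<n. \<Sum>e<E. f e i)) = (\<Sum>e<E. \<Sum>i<n. f e i)"
  by (cases "n = 0 \<or> E = 0") (auto simp: sum.swap[of _ "{..<E}"])

lemma bip_weight_eq_exp_mean:
  assumes "\<And>e i. e < E \<Longrightarrow> i < n \<Longrightarrow> 0 < gh z (proj z (fst (d e i))) (snd (d e i))"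
    and "\<And>e i. e < E \<Longrightarrow> i < n \<Longrightarrow> 0 < ph z e (proj z (fst (d e i))) (snd (d e i))"
  shows "bip_weight prior n E ph gh d z = prior z * exp (real n * real E *
           (1 / (real n * real E) * (\<Sum>i<n. \<Sum>e<E. ln (gh z (proj z (fst (d e i))) (snd (d e i))))
            - 1 / (real n * real E) * (\<Sum>i<n. \<Sum>e<E. ln (ph z e (proj z (fst (d e i))) (snd (d e i))))))"
proof -
  have "bip_weight prior n E ph gh d z
      = prior z * exp (\<Sum>e<E. samp_ll n z (gh z) (d e) - samp_ll n z (ph z e) (d e))"
    using assms by (rule bip_weight_eq_exp)
  then show ?thesis
    unfolding right_diff_distrib mult_average_double_sum by (simp add: samp_ll_def sum_subtractf)
qed

theorem theorem7:
  fixes p :: nat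
    and Env :: "'env set"
    and \<nu> :: "((nat \<Rightarrow> real) \<times> 'y) measure"
    and pd :: "'env \<Rightarrow> (nat \<Rightarrow> real) \<times> 'y \<Rightarrow> real"
    and Pc :: "nat set \<Rightarrow> 'y cond set"
    and pbar :: "nat set \<Rightarrow> 'env \<Rightarrow> 'y cond"
    and gbar :: "nat set \<Rightarrow> 'y cond"
    and prior :: "nat set \<Rightarrow> real"
    and M :: "nat \<Rightarrow> nat \<Rightarrow> 'y dataset measure"
    and phat :: "nat \<Rightarrow> nat \<Rightarrow> 'y dataset \<Rightarrow> nat set \<Rightarrow> nat \<Rightarrow> 'y cond"
    and ghat :: "nat \<Rightarrow> nat \<Rightarrow> 'y dataset \<Rightarrow> nat set \<Rightarrow> 'y cond"
    and zhat :: "nat \<Rightarrow> nat \<Rightarrow> 'y dataset \<Rightarrow> nat set"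
    and mubar :: "nat set \<Rightarrow> real"
    and Zstar :: "nat set set"
  assumes Env: "finite Env" "Env \<noteq> {}"
    and dens: "\<And>e. e \<in> Env \<Longrightarrow> pd e \<in> borel_measurable \<nu>"
              "\<And>e w. e \<in> Env \<Longrightarrow> 0 \<le> pd e w"
              "\<And>e. e \<in> Env \<Longrightarrow> (\<integral>\<^sup>+ w. ennreal (pd e w) \<partial>\<nu>) = 1"
    and model_pos: "\<And>z f x y. z \<in> selections p \<Longrightarrow> f \<in> Pc z \<Longrightarrow> 0 < f x y"
    and pbar: "\<And>z e. z \<in> selections p \<Longrightarrow> e \<in> Env \<Longrightarrow>
                 maximizes (\<lambda>f. pop_ll \<nu> pd z f e) (Pc z) (pbar z e)"
    and gbar: "\<And>z. z \<in> selections p \<Longrightarrow>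
                 maximizes (\<lambda>f. \<Sum>e\<in>Env. pop_ll \<nu> pd z f e) (Pc z) (gbar z)"
    and integrable: "\<And>z e. z \<in> selections p \<Longrightarrow> e \<in> Env \<Longrightarrow>
          integrable (env_dist \<nu> pd e) (\<lambda>w. ln (pbar z e (proj z (fst w)) (snd w)))"
          "\<And>z e. z \<in> selections p \<Longrightarrow> e \<in> Env \<Longrightarrow>
          integrable (env_dist \<nu> pd e) (\<lambda>w. ln (gbar z (proj z (fst w)) (snd w)))"
    and mubar_def: "\<And>z. mubar z = (1 / real (card Env)) *
          (\<Sum>e\<in>Env. \<integral>w. ln (pbar z e (proj z (fst w)) (snd w))
                         - ln (gbar z (proj z (fst w)) (snd w)) \<partial>env_dist \<nu> pd e)"
    and Zstar_def: "Zstar = {z \<in> selections p. \<forall>z'\<in>selections p. mubar z \<le> mubar z'}"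
    and prior: "\<And>z. z \<in> selections p \<Longrightarrow> 0 \<le> prior z"
               "(\<Sum>z\<in>selections p. prior z) = 1"
    and prior_Zstar: "(\<Sum>z\<in>Zstar. prior z) > 0"
    and M_def: "\<And>n E. M n E = data_law \<nu> Env pd n E"
    and phat: "\<And>n E d z e. d \<in> space (M n E) \<Longrightarrow> z \<in> selections p \<Longrightarrow> e < E \<Longrightarrow>
                 maximizes (\<lambda>f. samp_ll n z f (d e)) (Pc z) (phat n E d z e)"
    and ghat: "\<And>n E d z. d \<in> space (M n E) \<Longrightarrow> z \<in> selections p \<Longrightarrow>
                 maximizes (\<lambda>f. \<Sum>e<E. samp_ll n z f (d e)) (Pc z) (ghat n E d z)"
    and zhat: "\<And>n E d. d \<in> space (M n E) \<Longrightarrow>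
                 maximizes (bip_post p prior n E (phat n E d) (ghat n E d) d) (selections p) (zhat n E d)"
    and zhat_meas: "\<And>n E. zhat n E \<in> M n E \<rightarrow>\<^sub>M count_space UNIV"
    and conv_local: "\<And>z. z \<in> selections p \<Longrightarrow> prior z > 0 \<Longrightarrow>
          conv_prob M
            (\<lambda>n E d. (1 / (real n * real E)) *
               (\<Sum>i<n. \<Sum>e<E. ln (phat n E d z e (proj z (fst (d e i))) (snd (d e i)))))
            ((1 / real (card Env)) *
               (\<Sum>e\<in>Env. \<integral>w. ln (pbar z e (proj z (fst w)) (snd w)) \<partial>env_dist \<nu> pd e))"
    and conv_pooled: "\<And>z. z \<in> selections p \<Longrightarrow> prior z > 0 \<Longrightarrow>
          conv_prob M
            (\<lambda>n E d. (1 / (real n * real E)) *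
               (\<Sum>i<n. \<Sum>e<E. ln (ghat n E d z (proj z (fst (d e i))) (snd (d e i)))))
            ((1 / real (card Env)) *
               (\<Sum>e\<in>Env. \<integral>w. ln (gbar z (proj z (fst w)) (snd w)) \<partial>env_dist \<nu> pd e))"
  shows "((\<lambda>(n, E). measure (M n E) {d \<in> space (M n E). zhat n E d \<in> Zstar}) \<longlongrightarrow> 1)
           (sequentially \<times>\<^sub>F sequentially) \<and>
         conv_prob M (\<lambda>n E d. \<Sum>z\<in>Zstar. bip_post p prior n E (phat n E d) (ghat n E d) d z) 1"
proof -
  define L where "L z = (1 / real (card Env)) *
      (\<Sum>e\<in>Env. \<integral>w. ln (pbar z e (proj z (fst w)) (snd w)) \<partial>env_dist \<nu> pd e)" for z
  define G where "G z = (1 / real (card Env)) *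
      (\<Sum>e\<in>Env. \<integral>w. ln (gbar z (proj z (fst w)) (snd w)) \<partial>env_dist \<nu> pd e)" for z
  define A where "A n E d z =
      1 / (real n * real E) * (\<Sum>i<n. \<Sum>e<E. ln (ghat n E d z (proj z (fst (d e i))) (snd (d e i))))
      - 1 / (real n * real E) * (\<Sum>i<n. \<Sum>e<E. ln (phat n E d z e (proj z (fst (d e i))) (snd (d e i))))"
    for n E d z
  have prob_space_data: "prob_space (M n E)" for n E
    unfolding M_def using Env dens by (intro prob_space_data_law prob_space_env_dist) auto
  have "mubar z = - (G z - L z)" if "z \<in> selections p" for z
    using integrable that unfolding mubar_def L_def G_def
    by (simp add: integral_diff sum_subtractf right_diff_distrib)
  then have Zstar_eq: "Zstar = {z \<in> selections p. \<forall>z'\<in>selections p. G z' - L z' \<le> G z - L z}"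
    unfolding Zstar_def by auto
  obtain z0 where z0: "z0 \<in> Zstar" "0 < prior z0"
    using prior_Zstar sum_nonpos[of Zstar prior] by (meson not_le)
  interpret posterior_concentration M "selections p" prior A "\<lambda>z. G z - L z" z0
    using prob_space_data prior(1) conv_prob_diff[OF prob_space_data conv_pooled conv_local] z0
    unfolding A_def G_def L_def Zstar_eq
    by (intro posterior_concentration.intro) (auto simp: selections_def)
  have bip_post_eq: "bip_post p prior n E (phat n E d) (ghat n E d) d z = posterior n E d z"
    if d: "d \<in> space (M n E)" and "z \<in> selections p" for n E d z
  proof -
    have "bip_weight prior n E (phat n E d) (ghat n E d) d z' = weight n E d z'"
      if "z' \<in> selections p" for z'
      using ghat[OF d] phat[OF d] model_pos that unfolding maximizes_def weight_def A_def
      by (intro bip_weight_eq_exp_mean) auto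
    then show ?thesis
      using \<open>z \<in> selections p\<close> unfolding bip_post_def posterior_def by (simp cong: sum.cong)
  qed
  have "maximizes (posterior n E d) (selections p) (zhat n E d)" if "d \<in> space (M n E)" for n E d
    using zhat[OF that] bip_post_eq[OF that]
      maximizes_cong[of "selections p" "bip_post p prior n E (phat n E d) (ghat n E d) d" "posterior n E d"]
    by blast
  moreover have "{d \<in> space (M n E). zhat n E d \<in> optimal} \<in> sets (M n E)" for n E
    using measurable_sets_Collect[OF zhat_meas, of "\<lambda>z. z \<in> optimal"] by simp
  moreover have "conv_prob M (\<lambda>n E d. \<Sum>z\<in>optimal. bip_post p prior n E (phat n E d) (ghat n E d) d z) 1"
    using conv_prob_posterior_optimal
  proof (rule conv_prob_cong)
    show "(\<Sum>z\<in>optimal. posterior n E d z)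
        = (\<Sum>z\<in>optimal. bip_post p prior n E (phat n E d) (ghat n E d) d z)"
      if "d \<in> space (M n E)" for n E d
      using bip_post_eq[OF that] optimal_subset by (intro sum.cong) auto
  qed
  moreover have "Zstar = optimal"
    by (simp add: optimal_def Zstar_eq)
  ultimately show ?thesis
    using tendsto_prob_maximizer_optimal by simp
qed

end
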